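(* $\mathcal{L}_{\mathsf{DSAFA}}\subsetneq\mathcal{L}_{\mathsf{SAFA}}$, where $\mathcal{L}_{\mathsf{DSAFA}}$ and $\mathcal{L}_{\mathsf{SAFA}}$ are the classes of data languages accepted by deterministic SAFA and by (nondeterministic) SAFA respectively.
   Context: $D$ is a fixed countably infinite set of data values; for a finite alphabet $\Sigma$, data languages are subsets of $(\Sigma\times D)^*$. A set augmented finite automaton (SAFA) is a tuple $M=(Q,\Sigma\times D,q_0,F,H,\delta)$: $Q$ finite set of states, $q_0\in Q$ initial, $F\subseteq Q$ final, $H=\{h_1,\dots,h_m\}$ a finite collection of (names of) sets of data values, $\delta\subseteq Q\times\Sigma\times C\times OP\times Q$ with $C=\{p(h_i),\,!p(h_i): h_i\in H\}$, $OP=\{-\}\cup\{\mathsf{ins}(h_i):h_i\in H\}$. Configurations are $(q,\langle S_1,\dots,S_m\rangle)$ with $S_i\subseteq D$ finite; initially state $q_0$ and all sets empty. On reading $(a,d)$, a transition $(q,a,\alpha,op,q')$ from the current state may be taken if $\alpha=p(h_i)$ and $d\in S_i$, or $\alpha=\,!p(h_i)$ and $d\notin S_i$; then the state becomes $q'$ and if $op=\mathsf{ins}(h_j)$ the value $d$ is added to $S_j$ ($op=-$ changes nothing). A word is accepted if some run reads it entirely and ends in $F$. A SAFA is deterministic (DSAFA) if for every $q\in Q$ and $a\in\Sigma$, all transitions from $q$ on $a$ test the same set $h_i$, with at most one transition having condition $p(h_i)$ and at most one having condition $!p(h_i)$. *)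

theory Defs
  imports Main "HOL-Library.Countable"
begin

text \<open>States, letters of the finite alphabet
  and names of the sets h_i are natural numbers; data values are of a type 'd
  (in the theorem: a countably infinite type).\<close>

datatype cond = P nat | NP nat
datatype oper = NoOp | Ins nat

record safa =
  states :: "nat set"
  alph   :: "nat set"
  init   :: nat
  final  :: "nat set"
  hsets  :: "nat set"
  delta  :: "(nat \<times> nat \<times> cond \<times> oper \<times> nat) set"

fun cond_set :: "cond \<Rightarrow> nat" where
  "cond_set (P i) = i" | "cond_set (NP i) = i"

fun oper_ok :: "nat set \<Rightarrow> oper \<Rightarrow> bool" where
  "oper_ok H NoOp = True" | "oper_ok H (Ins j) = (j \<in> H)"

definition wf_safa :: "safa \<Rightarrow> bool" where
  "wf_safa M \<longleftrightarrow> finite (states M) \<and> finite (alph M) \<and> init M \<in> states M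
     \<and> final M \<subseteq> states M \<and> finite (hsets M)
     \<and> (\<forall>(q,a,c,op,q') \<in> delta M. q \<in> states M \<and> a \<in> alph M \<and> cond_set c \<in> hsets M
            \<and> oper_ok (hsets M) op \<and> q' \<in> states M)"

fun sat :: "cond \<Rightarrow> 'd \<Rightarrow> (nat \<Rightarrow> 'd set) \<Rightarrow> bool" where
  "sat (P i) d S = (d \<in> S i)" | "sat (NP i) d S = (d \<notin> S i)"

fun apply_op :: "oper \<Rightarrow> 'd \<Rightarrow> (nat \<Rightarrow> 'd set) \<Rightarrow> (nat \<Rightarrow> 'd set)" where
  "apply_op NoOp d S = S" | "apply_op (Ins j) d S = S(j := insert d (S j))"

text \<open>Configurations: a state and the current contents of the sets h_i.\<close>
inductive run :: "safa \<Rightarrow> nat \<times> (nat \<Rightarrow> 'd set) \<Rightarrow> (nat \<times> 'd) list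
                    \<Rightarrow> nat \<times> (nat \<Rightarrow> 'd set) \<Rightarrow> bool" for M where
  run_nil: "run M c [] c"
| run_cons: "\<lbrakk> (q, a, \<alpha>, op, q') \<in> delta M; sat \<alpha> d S;
              run M (q', apply_op op d S) w c' \<rbrakk> \<Longrightarrow> run M (q, S) ((a, d) # w) c'"

definition lang :: "safa \<Rightarrow> (nat \<times> 'd) list set" where
  "lang M = {w. \<exists>q S. run M (init M, \<lambda>_. {}) w (q, S) \<and> q \<in> final M}"

definition deterministic :: "safa \<Rightarrow> bool" where
  "deterministic M \<longleftrightarrow> (\<forall>q \<in> states M. \<forall>a \<in> alph M. \<exists>i.
      (\<forall>c op q'. (q, a, c, op, q') \<in> delta M \<longrightarrow> cond_set c = i)
    \<and> (\<forall>op1 q1 op2 q2. (q, a, P i, op1, q1) \<in> delta M \<and> (q, a, P i, op2, q2) \<in> delta M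
          \<longrightarrow> op1 = op2 \<and> q1 = q2)
    \<and> (\<forall>op1 q1 op2 q2. (q, a, NP i, op1, q1) \<in> delta M \<and> (q, a, NP i, op2, q2) \<in> delta M
          \<longrightarrow> op1 = op2 \<and> q1 = q2))"

definition L_SAFA :: "(nat \<times> 'd) list set set" where
  "L_SAFA = {lang M | M. wf_safa M}"

definition L_DSAFA :: "(nat \<times> 'd) list set set" where
  "L_DSAFA = {lang M | M. wf_safa M \<and> deterministic M}"

end

theory Submission
  imports Defs
begin

text \<open>A deterministic SAFA reaches a unique configuration after reading a prefix, and from
  a given state and letter it only asks whether the next datum lies in one fixed set h_i.
  Hence two data values that are both absent from, or both present in, h_i are
  interchangeable at that step, provided neither occurs later in the word.
  The language \<open>{d1 d2 d3 d4 | d3 = d1 \<or> (d3 = d2 \<and> d4 = d1)}\<close> is accepted by a small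
  nondeterministic SAFA. In the configuration reached after \<open>a b\<close>, a fresh value \<open>c\<close> lies
  in no set: if \<open>a \<notin> h_i\<close> then \<open>abab\<close> yields \<open>abcb\<close>; if \<open>b \<notin> h_i\<close> then \<open>abba\<close> yields
  \<open>abca\<close>; otherwise \<open>abae\<close> yields \<open>abbe\<close>. None of these words is in the language.\<close>

lemma run_Nil_iff: "run M c [] c' \<longleftrightarrow> c' = c"
  by (auto intro: run.intros elim: run.cases)

lemma run_Cons_iff: "run M (q,S) ((a,d)#w) c' \<longleftrightarrow>
   (\<exists>\<alpha> op q'. (q,a,\<alpha>,op,q') \<in> delta M \<and> sat \<alpha> d S \<and> run M (q', apply_op op d S) w c')"
proof
  assume "run M (q,S) ((a,d)#w) c'"
  then show "\<exists>\<alpha> op q'. (q,a,\<alpha>,op,q') \<in> delta M \<and> sat \<alpha> d S \<and> run M (q', apply_op op d S) w c'"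
    by (cases rule: run.cases) auto
qed (auto intro: run.intros)

lemma run_iff_list_case: "run M (q,S) w c' \<longleftrightarrow> (case w of [] \<Rightarrow> c' = (q,S)
   | (a,d) # w' \<Rightarrow> \<exists>\<alpha> op q'. (q,a,\<alpha>,op,q') \<in> delta M \<and> sat \<alpha> d S \<and> run M (q', apply_op op d S) w' c')"
  by (cases w) (auto simp: run_Nil_iff run_Cons_iff split: prod.split)

lemma run_append: "run M c (u @ v) c' \<longleftrightarrow> (\<exists>c''. run M c u c'' \<and> run M c'' v c')"
proof (induction u arbitrary: c)
  case Nil
  then show ?case by (simp add: run_Nil_iff)
next
  case (Cons x u)
  obtain a d where x: "x = (a,d)" by (cases x)
  obtain q S where c: "c = (q,S)" by (cases c)
  show ?case using Cons.IH unfolding x c by (simp add: run_Cons_iff) meson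
qed

lemma run_sets_subset: "run M (q,S) w (q',S') \<Longrightarrow> S' i \<subseteq> S i \<union> snd ` set w"
proof (induction w arbitrary: q S)
  case Nil
  then show ?case by (simp add: run_Nil_iff)
next
  case (Cons x w)
  obtain a d where x: "x = (a,d)" by (cases x)
  then obtain \<alpha> op q'' where "run M (q'', apply_op op d S) w (q',S')"
    using Cons.prems by (auto simp: run_Cons_iff)
  moreover have "apply_op op d S i \<subseteq> S i \<union> {d}" by (cases op) auto
  ultimately show ?case using Cons.IH x by fastforce
qed

lemma run_agreeing_sets:
  assumes "run M (q,S) w (q',S')" "\<forall>i. S i - V = T i - V" "snd ` set w \<inter> V = {}"
  shows "\<exists>T'. run M (q,T) w (q',T')"
  using assms
proof (induction w arbitrary: q S T)
  case Nil
  then show ?case by (auto simp: run_Nil_iff)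
next
  case (Cons x w)
  obtain a d where x: "x = (a,d)" by (cases x)
  with Cons.prems obtain \<alpha> op q'' where
    step: "(q,a,\<alpha>,op,q'') \<in> delta M" "sat \<alpha> d S" "run M (q'', apply_op op d S) w (q',S')"
    by (auto simp: run_Cons_iff)
  have "d \<notin> V" using Cons.prems x by auto
  then have sat: "sat \<alpha> d T"
    using step(2) Cons.prems(2) by (cases \<alpha>) auto
  have agree: "\<forall>i. apply_op op d S i - V = apply_op op d T i - V"
    using \<open>d \<notin> V\<close> Cons.prems(2) by (cases op) auto
  obtain T' where "run M (q'', apply_op op d T) w (q',T')"
    using Cons.IH[OF step(3) agree] Cons.prems(3) by auto
  then show ?case
    using step(1) sat x by (auto simp: run_Cons_iff)
qed

definition accepts_from :: "safa \<Rightarrow> nat \<times> (nat \<Rightarrow> 'd set) \<Rightarrow> (nat \<times> 'd) list \<Rightarrow> bool" where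
  "accepts_from M c w \<longleftrightarrow> (\<exists>q S. run M c w (q,S) \<and> q \<in> final M)"

lemma accepts_from_Cons_change_datum:
  assumes acc: "accepts_from M (q,S) ((a,d)#w)"
    and tests_i: "\<forall>\<alpha> op q'. (q,a,\<alpha>,op,q') \<in> delta M \<longrightarrow> cond_set \<alpha> = i"
    and same_side: "d \<in> S i \<longleftrightarrow> d' \<in> S i"
    and fresh: "d \<notin> snd ` set w" "d' \<notin> snd ` set w"
  shows "accepts_from M (q,S) ((a,d')#w)"
proof -
  obtain \<alpha> op q'' qf Sf where step: "(q,a,\<alpha>,op,q'') \<in> delta M" "sat \<alpha> d S"
    and tail: "run M (q'', apply_op op d S) w (qf,Sf)" "qf \<in> final M"
    using acc by (auto simp: accepts_from_def run_Cons_iff)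
  have "cond_set \<alpha> = i" using tests_i step(1) by blast
  then have sat: "sat \<alpha> d' S"
    using step(2) same_side by (cases \<alpha>) auto
  have agree: "\<forall>j. apply_op op d S j - {d,d'} = apply_op op d' S j - {d,d'}"
    by (cases op) auto
  have "snd ` set w \<inter> {d,d'} = {}"
    using fresh by blast
  then obtain Tf where "run M (q'', apply_op op d' S) w (qf,Tf)"
    using run_agreeing_sets[OF tail(1) agree] by blast
  then show ?thesis
    using step(1) sat tail(2) unfolding accepts_from_def run_Cons_iff by blast
qed

lemma deterministic_tested_set:
  assumes "deterministic M" "wf_safa M"
  obtains i where "\<forall>\<alpha> op q'. (q,a,\<alpha>,op,q') \<in> delta M \<longrightarrow> cond_set \<alpha> = i"
proof (cases "q \<in> states M \<and> a \<in> alph M")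
  case True
  then show ?thesis using assms(1) that unfolding deterministic_def by blast
next
  case False
  then show ?thesis using assms(2) that unfolding wf_safa_def by blast
qed

lemma deterministic_transition_unique:
  assumes "deterministic M" "wf_safa M"
    and "(q,a,\<alpha>1,op1,q1) \<in> delta M" "sat \<alpha>1 d S"
    and "(q,a,\<alpha>2,op2,q2) \<in> delta M" "sat \<alpha>2 d S"
  shows "op1 = op2 \<and> q1 = q2"
proof -
  have "q \<in> states M" "a \<in> alph M" using assms(2,3) unfolding wf_safa_def by auto
  then obtain i where i: "\<forall>c op q'. (q, a, c, op, q') \<in> delta M \<longrightarrow> cond_set c = i"
    "\<forall>op1 q1 op2 q2. (q, a, P i, op1, q1) \<in> delta M \<and> (q, a, P i, op2, q2) \<in> delta M
          \<longrightarrow> op1 = op2 \<and> q1 = q2"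
    "\<forall>op1 q1 op2 q2. (q, a, NP i, op1, q1) \<in> delta M \<and> (q, a, NP i, op2, q2) \<in> delta M
          \<longrightarrow> op1 = op2 \<and> q1 = q2"
    using assms(1) unfolding deterministic_def by blast
  have "cond_set \<alpha>1 = i" "cond_set \<alpha>2 = i"
    using i(1) assms(3,5) by blast+
  then have "\<alpha>1 = \<alpha>2" and "\<alpha>1 = P i \<or> \<alpha>1 = NP i"
    using assms(4,6) by (cases \<alpha>1; cases \<alpha>2; auto)+
  then show ?thesis using i(2,3) assms(3,5) by blast
qed

lemma run_deterministic:
  assumes "deterministic M" "wf_safa M"
  shows "run M c w c1 \<Longrightarrow> run M c w c2 \<Longrightarrow> c1 = c2"
proof (induction arbitrary: c2 rule: run.induct)
  case (run_nil c)
  then show ?case by (simp add: run_Nil_iff)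
next
  case (run_cons q a \<alpha> op q' d S w c')
  then obtain \<beta> op2 q2 where "(q,a,\<beta>,op2,q2) \<in> delta M" "sat \<beta> d S"
    "run M (q2, apply_op op2 d S) w c2" by (auto simp: run_Cons_iff)
  then show ?case
    using run_cons deterministic_transition_unique[OF assms] by metis
qed

lemma deterministic_lang_append_iff:
  assumes "deterministic M" "wf_safa M" "run M (init M, \<lambda>_. {}) u c"
  shows "u @ v \<in> lang M \<longleftrightarrow> accepts_from M c v"
proof -
  have "u @ v \<in> lang M \<longleftrightarrow> (\<exists>c'. run M (init M, \<lambda>_. {}) u c' \<and> accepts_from M c' v)"
    by (auto simp: lang_def accepts_from_def run_append)
  also have "\<dots> \<longleftrightarrow> accepts_from M c v"
    using assms(3) run_deterministic[OF assms] by blast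
  finally show ?thesis .
qed

lemma single_tested_set_cannot_separate:
  assumes tests_i: "\<forall>\<alpha> op q'. (q,x,\<alpha>,op,q') \<in> delta M \<longrightarrow> cond_set \<alpha> = i"
    and distinct: "distinct [a, b, c, e]" and "c \<notin> S i"
    and acc: "accepts_from M (q,S) [(x,a),(x,e)]" "accepts_from M (q,S) [(x,a),(x,b)]"
      "accepts_from M (q,S) [(x,b),(x,a)]"
  shows "accepts_from M (q,S) [(x,b),(x,e)] \<or> accepts_from M (q,S) [(x,c),(x,b)]
      \<or> accepts_from M (q,S) [(x,c),(x,a)]"
proof -
  note change = accepts_from_Cons_change_datum[OF _ tests_i]
  consider "a \<notin> S i" | "b \<notin> S i" | "a \<in> S i" "b \<in> S i" by blast
  then show ?thesis
  proof cases
    case 1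
    then show ?thesis using change[OF acc(2), of c] distinct \<open>c \<notin> S i\<close> by auto
  next
    case 2
    then show ?thesis using change[OF acc(3), of c] distinct \<open>c \<notin> S i\<close> by auto
  next
    case 3
    then show ?thesis using change[OF acc(1), of b] distinct by auto
  qed
qed

definition witness_safa :: safa where
  "witness_safa = \<lparr>states = {0..5}, alph = {0}, init = 0, final = {4}, hsets = {0,1},
     delta = {(0,0,NP 0,Ins 0,1), (1,0,NP 1,Ins 1,2), (2,0,P 0,NoOp,3), (2,0,P 1,NoOp,5),
              (3,0,P 0,NoOp,4), (3,0,NP 0,NoOp,4), (5,0,P 0,NoOp,4)}\<rparr>"

definition witness_lang :: "(nat \<times> 'd) list set" where
  "witness_lang = {[(0,x),(0,y),(0,z),(0,u)] | x y z u. z = x \<or> z = y \<and> u = x}"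

lemma wf_witness_safa: "wf_safa witness_safa"
  unfolding wf_safa_def witness_safa_def by auto

lemma lang_witness_safa: "lang witness_safa = witness_lang"
proof
  show "lang witness_safa \<subseteq> witness_lang"
    unfolding lang_def witness_lang_def witness_safa_def
    by (auto, (subst (asm) run_iff_list_case, auto split: list.splits)+)
  show "witness_lang \<subseteq> lang witness_safa"
    unfolding lang_def witness_lang_def witness_safa_def
    by (auto simp: run_Cons_iff run_Nil_iff conj_disj_distribR ex_disj_distrib)
qed

lemma witness_lang_not_deterministic:
  fixes a b c e :: 'd
  assumes "distinct [a, b, c, e]" "deterministic M" "wf_safa M"
  shows "(lang M :: (nat \<times> 'd) list set) \<noteq> witness_lang"
proof
  assume L: "(lang M :: (nat \<times> 'd) list set) = witness_lang"
  have "[(0,a),(0,b)] @ [(0,a),(0,b)] \<in> lang M"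
    using assms(1) by (simp add: L witness_lang_def)
  then obtain q S where prefix: "run M (init M, \<lambda>_. {}) [(0,a),(0,b)] (q,S)"
    by (auto simp: lang_def run_append simp del: append.simps)
  have acc: "accepts_from M (q,S) v \<longleftrightarrow> [(0,a),(0,b)] @ v \<in> witness_lang" for v
    using deterministic_lang_append_iff[OF assms(2,3) prefix] L by simp
  obtain i where "\<forall>\<alpha> op q'. (q,0,\<alpha>,op,q') \<in> delta M \<longrightarrow> cond_set \<alpha> = i"
    using deterministic_tested_set[OF assms(2,3)] .
  moreover have "c \<notin> S i"
    using run_sets_subset[OF prefix, of i] assms(1) by auto
  ultimately show False
    using single_tested_set_cannot_separate[of q 0 M i a b c e S] assms(1)
    by (auto simp: acc witness_lang_def)
qed

lemma infinite_ex_distinct_list: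
  assumes "infinite (UNIV :: 'a set)"
  shows "\<exists>xs :: 'a list. distinct xs \<and> length xs = n"
proof -
  obtain A :: "'a set" where "finite A" "card A = n"
    using infinite_arbitrarily_large[OF assms] by blast
  then show ?thesis using distinct_card finite_distinct_list by metis
qed

theorem theorem13:
  assumes "infinite (UNIV :: 'd::countable set)"
  shows "(L_DSAFA :: (nat \<times> 'd) list set set) \<subset> L_SAFA"
proof -
  obtain a b c e :: 'd where "distinct [a, b, c, e]"
    using infinite_ex_distinct_list[OF assms, of 4] by (auto simp: length_Suc_conv numeral_eq_Suc)
  have "lang witness_safa \<in> (L_SAFA :: (nat \<times> 'd) list set set)"
    unfolding L_SAFA_def using wf_witness_safa by blast
  moreover have "lang witness_safa \<notin> (L_DSAFA :: (nat \<times> 'd) list set set)"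
    using witness_lang_not_deterministic[OF \<open>distinct [a, b, c, e]\<close>]
    by (auto simp: L_DSAFA_def lang_witness_safa)
  ultimately show ?thesis
    unfolding L_DSAFA_def L_SAFA_def by blast
qed

end
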